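(* Let $a_1,\dots,a_m\in\mathbb R^n$ satisfy $\mathbb E_{i\in[m]}\|a_i\|_2^4\ge1$ and let $A=\sum_{i=1}^m e_ia_i^T/\sqrt n$. Then $\|A\|_{2\to4}\ge\left(\frac{3}{1+2/n}\right)^{1/4}$.
   Context: $e_i$ is the $i$-th standard basis vector of $\mathbb R^m$, so $(Ax)_i=\frac1{\sqrt n}\sum_{j}a_{i,j}x_j$. Norms are expectation norms: for $v\in\mathbb R^N$, $\|v\|_p=(\frac1N\sum_{j}|v_j|^p)^{1/p}$, and $\|A\|_{2\to4}=\max_{x\ne0}\|Ax\|_4/\|x\|_2$; $\mathbb E_{i\in[m]}$ is the uniform average over $i$. *)

theory Defs
  imports "HOL-Analysis.Analysis"
begin

definition exp_pnorm :: "real \<Rightarrow> real ^ 'n::finite \<Rightarrow> real" where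
  "exp_pnorm p v = ((\<Sum>j\<in>UNIV. \<bar>v $ j\<bar> powr p) / real CARD('n)) powr (1 / p)"

definition norm_2_to_4 :: "real ^ 'n::finite ^ 'm::finite \<Rightarrow> real" where
  "norm_2_to_4 A = Sup {exp_pnorm 4 (A *v x) / exp_pnorm 2 x | x. x \<noteq> 0}"

end

theory Submission
  imports Defs
begin

text \<open>
  For \<open>x\<close> uniform on the unit sphere of \<open>\<real>\<^sup>n\<close> the mean of \<open>(b \<bullet> x)\<^sup>4\<close> is
  \<open>3 \<parallel>b\<parallel>\<^sup>4 / (n (n + 2))\<close>; a finite set of test vectors reproduces this average.
  Summing \<open>(b \<bullet> x)\<^sup>4\<close> over the \<open>2\<^sup>n\<close> sign vectors \<open>x \<in> {-1, 1}\<^sup>n\<close> kills every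
  monomial whose indices do not pair up, leaving \<open>2\<^sup>n (3 \<parallel>b\<parallel>\<^sup>4 - 2 \<Sum>\<^sub>j b\<^sub>j\<^sup>4)\<close>;
  adding \<open>2 \<cdot> 2\<^sup>n\<close> times the sum over the coordinate vectors gives exactly
  \<open>3 \<cdot> 2\<^sup>n \<parallel>b\<parallel>\<^sup>4\<close>. Hence for \<open>F x = \<Sum>\<^sub>i (a\<^sub>i \<bullet> x)\<^sup>4\<close> some test vector satisfies
  \<open>n (n + 2) F x \<ge> 3 (\<Sum>\<^sub>i \<parallel>a\<^sub>i\<parallel>\<^sup>4) \<parallel>x\<parallel>\<^sup>4\<close>, which in expectation norms is the
  claimed lower bound for \<open>\<parallel>A x\<parallel>\<^sub>4 / \<parallel>x\<parallel>\<^sub>2\<close>.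
\<close>

definition rademacher :: "('n \<Rightarrow> bool) \<Rightarrow> 'n \<Rightarrow> real" where
  "rademacher s j = (if s j then 1 else -1)"

lemma rademacher_flip:
  "rademacher (s(q := \<not> s q)) j = (if j = q then - rademacher s j else rademacher s j)"
  by (simp add: rademacher_def)

lemma rademacher_mult_self [simp]: "rademacher s j * rademacher s j = 1"
  by (simp add: rademacher_def)

lemma sum_eq_0_if_flip_negates:
  fixes h :: "('n::finite \<Rightarrow> bool) \<Rightarrow> real"
  assumes "\<And>s. h (s(q := \<not> s q)) = - h s"
  shows "(\<Sum>s\<in>UNIV. h s) = 0"
proof -
  let ?flip = "\<lambda>s::'n \<Rightarrow> bool. s(q := \<not> s q)"
  have "(\<Sum>s\<in>UNIV. h s) = (\<Sum>s\<in>UNIV. h (?flip s))"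
    by (rule sum.reindex_bij_witness[of _ ?flip ?flip]) auto
  also have "\<dots> = - (\<Sum>s\<in>UNIV. h s)"
    by (simp add: assms sum_negf)
  finally show ?thesis by simp
qed

definition paired :: "'a \<Rightarrow> 'a \<Rightarrow> 'a \<Rightarrow> 'a \<Rightarrow> bool" where
  "paired j k l p \<longleftrightarrow> (j = k \<and> l = p) \<or> (j = l \<and> k = p) \<or> (j = p \<and> k = l)"

lemma sum_rademacher_prod4:
  fixes j k l p :: "'n::finite"
  shows "(\<Sum>s\<in>UNIV. rademacher s j * rademacher s k * rademacher s l * rademacher s p)
    = (if paired j k l p then real CARD('n \<Rightarrow> bool) else 0)"
proof (cases "paired j k l p")
  case True
  then have "rademacher s j * rademacher s k * rademacher s l * rademacher s p = 1" for s
    by (auto simp: paired_def rademacher_def)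
  with True show ?thesis by simp
next
  case False
  then consider "j \<notin> {k, l, p}" | "k \<notin> {j, l, p}" | "l \<notin> {j, k, p}" | "p \<notin> {j, k, l}"
    unfolding paired_def by blast
  then have "(\<Sum>s\<in>UNIV. rademacher s j * rademacher s k * rademacher s l * rademacher s p) = 0"
    by cases (rule sum_eq_0_if_flip_negates, auto simp: rademacher_flip)+
  with False show ?thesis by simp
qed

lemma power4_sum:
  fixes f :: "'a \<Rightarrow> 'b::comm_semiring_1"
  shows "(\<Sum>j\<in>A. f j) ^ 4 = (\<Sum>j\<in>A. \<Sum>k\<in>A. \<Sum>l\<in>A. \<Sum>p\<in>A. f j * f k * f l * f p)"
  by (simp add: power4_eq_xxxx sum_distrib_left sum_distrib_right mult_ac)

lemma sum_paired:
  fixes b :: "'n::finite \<Rightarrow> real"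
  shows "(\<Sum>j\<in>UNIV. \<Sum>k\<in>UNIV. \<Sum>l\<in>UNIV. \<Sum>p\<in>UNIV.
      if paired j k l p then b j * b k * b l * b p else 0)
    = 3 * (\<Sum>j\<in>UNIV. (b j)^2)^2 - 2 * (\<Sum>j\<in>UNIV. (b j)^4)"
proof -
  let ?S2 = "(\<Sum>j\<in>UNIV. (b j)^2)^2"
  have sum_if_const_cond: "(\<Sum>x\<in>A. if c then f x else 0) = (if c then sum f A else 0)"
    for c and A :: "'n set" and f :: "'n \<Rightarrow> real"
    by simp
  have pairing_sums:
    "(\<Sum>j\<in>UNIV. \<Sum>k\<in>UNIV. \<Sum>l\<in>UNIV. \<Sum>p\<in>UNIV.
        if j = k then if l = p then (b j)^2 * (b l)^2 else 0 else 0) = ?S2"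
    "(\<Sum>j\<in>UNIV. \<Sum>k\<in>UNIV. \<Sum>l\<in>UNIV. \<Sum>p\<in>UNIV.
        if j = l then if k = p then (b j)^2 * (b k)^2 else 0 else 0) = ?S2"
    "(\<Sum>j\<in>UNIV. \<Sum>k\<in>UNIV. \<Sum>l\<in>UNIV. \<Sum>p\<in>UNIV.
        if j = p then if k = l then (b j)^2 * (b k)^2 else 0 else 0) = ?S2"
    by (simp_all add: sum_if_const_cond power2_eq_square sum_product)
  have diagonal_sum:
    "(\<Sum>j\<in>UNIV. \<Sum>k\<in>UNIV. \<Sum>l\<in>UNIV. \<Sum>p\<in>UNIV.
        if j = k then if k = l then if l = p then (b j)^4 else 0 else 0 else 0)
      = (\<Sum>j\<in>UNIV. (b j)^4)"
    by (simp add: sum_if_const_cond)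
  \<comment> \<open>inclusion-exclusion: two of the three pairings hold only if all four indices agree\<close>
  have paired_indicator: "(if paired j k l p then b j * b k * b l * b p else 0)
      = (if j = k then if l = p then (b j)^2 * (b l)^2 else 0 else 0)
      + (if j = l then if k = p then (b j)^2 * (b k)^2 else 0 else 0)
      + (if j = p then if k = l then (b j)^2 * (b k)^2 else 0 else 0)
      - 2 * (if j = k then if k = l then if l = p then (b j)^4 else 0 else 0 else 0)" for j k l p
    by (auto simp: paired_def power2_eq_square power4_eq_xxxx mult_ac)
  show ?thesis
    unfolding paired_indicator sum.distrib sum_subtractf sum_distrib_left[symmetric]
      pairing_sums diagonal_sum by simp
qed

lemma sum_rademacher_power4:
  fixes b :: "'n::finite \<Rightarrow> real"
  shows "(\<Sum>s\<in>UNIV. (\<Sum>j\<in>UNIV. b j * rademacher s j) ^ 4)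
    = real CARD('n \<Rightarrow> bool) * (3 * (\<Sum>j\<in>UNIV. (b j)^2)^2 - 2 * (\<Sum>j\<in>UNIV. (b j)^4))"
proof -
  have "(\<Sum>s\<in>UNIV. (\<Sum>j\<in>UNIV. b j * rademacher s j) ^ 4)
    = (\<Sum>j\<in>UNIV. \<Sum>k\<in>UNIV. \<Sum>l\<in>UNIV. \<Sum>p\<in>UNIV. b j * b k * b l * b p *
        (\<Sum>s\<in>UNIV. rademacher s j * rademacher s k * rademacher s l * rademacher s p))"
    unfolding power4_sum sum.swap[where A = "UNIV :: ('n \<Rightarrow> bool) set"]
    by (simp add: sum_distrib_left mult_ac)
  also have "\<dots> = real CARD('n \<Rightarrow> bool) * (\<Sum>j\<in>UNIV. \<Sum>k\<in>UNIV. \<Sum>l\<in>UNIV. \<Sum>p\<in>UNIV.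
      if paired j k l p then b j * b k * b l * b p else 0)"
    unfolding sum_rademacher_prod4 sum_distrib_left by (intro sum.cong refl) simp
  finally show ?thesis by (simp add: sum_paired)
qed

definition sign_vector :: "('n \<Rightarrow> bool) \<Rightarrow> real ^ 'n" where
  "sign_vector s = (\<chi> j. rademacher s j)"

lemma sign_vector_nonzero: "sign_vector s \<noteq> 0"
proof
  assume "sign_vector s = 0"
  then have "rademacher s j = 0" for j
    by (metis sign_vector_def vec_lambda_beta zero_index)
  then show False
    using rademacher_mult_self[of s undefined] by simp
qed

lemma norm_power2_eq_sum: "norm (v :: real ^ 'n) ^ 2 = (\<Sum>j\<in>UNIV. (v $ j)^2)"
  unfolding power2_norm_eq_inner inner_vec_def by (simp add: power2_eq_square)

lemma norm_sign_vector_power4: "norm (sign_vector s :: real ^ 'n) ^ 4 = real CARD('n) ^ 2"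
proof -
  have norm2: "norm (sign_vector s :: real ^ 'n) ^ 2 = real CARD('n)"
    unfolding norm_power2_eq_sum by (simp add: sign_vector_def power2_eq_square)
  show ?thesis by (simp flip: norm2)
qed

lemma sum_inner_sign_vector_power4:
  fixes b :: "real ^ 'n::finite"
  shows "(\<Sum>s\<in>UNIV. (b \<bullet> sign_vector s) ^ 4) + 2 * real CARD('n \<Rightarrow> bool) * (\<Sum>j\<in>UNIV. (b \<bullet> axis j 1) ^ 4)
    = 3 * real CARD('n \<Rightarrow> bool) * norm b ^ 4"
proof -
  have "b \<bullet> sign_vector s = (\<Sum>j\<in>UNIV. b $ j * rademacher s j)" for s
    by (simp add: sign_vector_def inner_vec_def)
  moreover have "norm b ^ 4 = (\<Sum>j\<in>UNIV. (b $ j)^2)^2"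
    by (simp flip: norm_power2_eq_sum)
  ultimately show ?thesis
    by (simp add: sum_rademacher_power4 inner_axis algebra_simps)
qed

lemma ex_sum_inner_power4_ge:
  fixes a :: "'m::finite \<Rightarrow> real ^ 'n::finite"
  defines "n \<equiv> real CARD('n)"
  shows "\<exists>x. x \<noteq> 0 \<and>
    3 * (\<Sum>i\<in>UNIV. norm (a i) ^ 4) * norm x ^ 4 \<le> n * (n + 2) * (\<Sum>i\<in>UNIV. (a i \<bullet> x) ^ 4)"
proof (rule ccontr)
  define F where "F x = (\<Sum>i\<in>UNIV. (a i \<bullet> x) ^ 4)" for x
  define S where "S = (\<Sum>i\<in>UNIV. norm (a i) ^ 4)"
  define N where "N = real CARD('n \<Rightarrow> bool)"
  assume "\<not> ?thesis"
  then have below: "n * (n + 2) * F x < 3 * S * norm x ^ 4" if "x \<noteq> 0" for x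
    using that by (auto simp: F_def S_def not_le)
  have "(\<Sum>s\<in>UNIV. F (sign_vector s)) + 2 * N * (\<Sum>j\<in>UNIV. F (axis j 1))
      = (\<Sum>i\<in>UNIV. (\<Sum>s\<in>UNIV. (a i \<bullet> sign_vector s) ^ 4) + 2 * N * (\<Sum>j\<in>UNIV. (a i \<bullet> axis j 1) ^ 4))"
    unfolding F_def sum.distrib sum_distrib_left by (subst (1 2) sum.swap) simp
  also have "\<dots> = 3 * N * S"
    unfolding N_def S_def sum_inner_sign_vector_power4 by (simp add: sum_distrib_left)
  finally have design: "(\<Sum>s\<in>UNIV. F (sign_vector s)) + 2 * N * (\<Sum>j\<in>UNIV. F (axis j 1)) = 3 * N * S" .
  have "(\<Sum>s\<in>UNIV. n * (n + 2) * F (sign_vector s)) < (\<Sum>s\<in>(UNIV :: ('n \<Rightarrow> bool) set). 3 * S * n ^ 2)"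
    by (intro sum_strict_mono) (use below[OF sign_vector_nonzero] in \<open>simp_all add: n_def norm_sign_vector_power4\<close>)
  then have signs: "n * (n + 2) * (\<Sum>s\<in>UNIV. F (sign_vector s)) < N * (3 * S * n ^ 2)"
    by (simp add: N_def flip: sum_distrib_left)
  have "(\<Sum>j\<in>UNIV. n * (n + 2) * F (axis j 1)) \<le> (\<Sum>j\<in>(UNIV :: 'n set). 3 * S)"
    by (intro sum_mono less_imp_le) (use below[of "axis _ 1"] in auto)
  then have axes: "n * (n + 2) * (\<Sum>j\<in>UNIV. F (axis j 1)) \<le> n * (3 * S)"
    by (simp add: n_def flip: sum_distrib_left)
  have "n * (n + 2) * (3 * N * S)
      = n * (n + 2) * (\<Sum>s\<in>UNIV. F (sign_vector s)) + 2 * N * (n * (n + 2) * (\<Sum>j\<in>UNIV. F (axis j 1)))"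
    unfolding design[symmetric] by (simp add: algebra_simps)
  also have "\<dots> < N * (3 * S * n ^ 2) + 2 * N * (n * (3 * S))"
    using signs axes by (intro add_less_le_mono mult_left_mono) (simp_all add: N_def)
  finally show False
    by (simp add: algebra_simps power2_eq_square)
qed

lemma exp_pnorm_nonneg: "0 \<le> exp_pnorm p v"
  by (simp add: exp_pnorm_def)

lemma exp_pnorm_2_eq_norm: "exp_pnorm 2 (v :: real ^ 'n::finite) = norm v / sqrt (real CARD('n))"
proof -
  have "(\<Sum>j\<in>UNIV. \<bar>v $ j\<bar> powr 2) = norm v ^ 2"
    by (simp add: norm_power2_eq_sum)
  then show ?thesis
    by (simp add: exp_pnorm_def powr_half_sqrt real_sqrt_divide)
qed

lemma real_sqrt_power4: "0 \<le> u \<Longrightarrow> sqrt u ^ 4 = u ^ 2"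
  using power_mult[of "sqrt u" 2 2] by simp

lemma exp_pnorm_2_power4: "exp_pnorm 2 (v :: real ^ 'n::finite) ^ 4 = norm v ^ 4 / real CARD('n) ^ 2"
  by (simp add: exp_pnorm_2_eq_norm power_divide real_sqrt_power4)

lemma powr_quarter_power4: "0 \<le> u \<Longrightarrow> (u powr (1 / 4)) ^ 4 = (u :: real)"
  by (cases "u = 0") (simp_all add: powr_power)

lemma exp_pnorm_4_power4: "exp_pnorm 4 (v :: real ^ 'n::finite) ^ 4 = (\<Sum>j\<in>UNIV. (v $ j) ^ 4) / real CARD('n)"
  by (simp add: exp_pnorm_def sum_nonneg powr_quarter_power4)

lemma exp_pnorm_4_le_norm: "exp_pnorm 4 (v :: real ^ 'n::finite) \<le> norm v"
proof -
  have "(\<Sum>j\<in>UNIV. (v $ j) ^ 4) \<le> (\<Sum>j\<in>UNIV. norm v ^ 2 * (v $ j) ^ 2)"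
  proof (rule sum_mono)
    fix j
    have "(v $ j) ^ 2 \<le> norm v ^ 2"
      using power_mono[OF component_le_norm_cart abs_ge_zero, of v j 2] by simp
    then have "(v $ j) ^ 2 * (v $ j) ^ 2 \<le> norm v ^ 2 * (v $ j) ^ 2"
      by (rule mult_right_mono) simp
    then show "(v $ j) ^ 4 \<le> norm v ^ 2 * (v $ j) ^ 2"
      by (simp flip: power_add)
  qed
  also have "\<dots> = norm v ^ 4"
    unfolding sum_distrib_left[symmetric] norm_power2_eq_sum[symmetric] by (simp flip: power_add)
  finally have "exp_pnorm 4 v ^ 4 \<le> norm v ^ 4"
    unfolding exp_pnorm_4_power4
    by (rule order_trans[OF divide_right_mono[of _ _ "real CARD('n)"]]) (simp_all add: divide_le_eq mult_le_cancel_left1)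
  then show ?thesis
    by (simp add: power_mono_iff exp_pnorm_nonneg)
qed

lemma bdd_above_exp_pnorm_ratio:
  fixes A :: "real ^ 'n::finite ^ 'm::finite"
  shows "bdd_above {exp_pnorm 4 (A *v x) / exp_pnorm 2 x | x. x \<noteq> 0}"
proof -
  obtain K where K: "\<And>x. norm (A *v x) \<le> norm x * K"
    using bounded_linear.pos_bounded[OF matrix_vector_mul_bounded_linear] by blast
  have "exp_pnorm 4 (A *v x) / exp_pnorm 2 x \<le> K * sqrt (real CARD('n))" if "x \<noteq> 0" for x
  proof -
    have "exp_pnorm 4 (A *v x) \<le> norm x * K"
      using exp_pnorm_4_le_norm K order_trans by blast
    then show ?thesis
      using that by (simp add: exp_pnorm_2_eq_norm field_simps)
  qed
  then show ?thesis
    by (intro bdd_aboveI[where M = "K * sqrt (real CARD('n))"]) auto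
qed

lemma exp_pnorm_ratio_le_norm_2_to_4:
  "x \<noteq> 0 \<Longrightarrow> exp_pnorm 4 (A *v x) / exp_pnorm 2 x \<le> norm_2_to_4 A"
  unfolding norm_2_to_4_def by (rule cSup_upper) (auto intro: bdd_above_exp_pnorm_ratio)

lemma exp_pnorm_ratio_power4:
  fixes a :: "'m::finite \<Rightarrow> real ^ 'n::finite" and x :: "real ^ 'n"
  assumes "x \<noteq> 0"
  defines "A \<equiv> (\<chi> i j. a i $ j / sqrt (real CARD('n))) :: real ^ 'n ^ 'm"
  shows "(exp_pnorm 4 (A *v x) / exp_pnorm 2 x) ^ 4
    = (\<Sum>i\<in>UNIV. (a i \<bullet> x) ^ 4) / (real CARD('m) * norm x ^ 4)"
proof -
  define n where "n = real CARD('n)"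
  have "(A *v x) $ i = (a i \<bullet> x) / sqrt n" for i
    by (simp add: A_def n_def matrix_vector_mult_def inner_vec_def sum_divide_distrib)
  then have numerator: "exp_pnorm 4 (A *v x) ^ 4 = (\<Sum>i\<in>UNIV. (a i \<bullet> x) ^ 4) / (n ^ 2 * real CARD('m))"
    by (simp add: exp_pnorm_4_power4 power_divide sum_divide_distrib real_sqrt_power4 n_def)
  have denominator: "exp_pnorm 2 x ^ 4 = norm x ^ 4 / n ^ 2"
    by (simp add: exp_pnorm_2_power4 n_def)
  show ?thesis
    unfolding power_divide numerator denominator using assms by (simp add: n_def field_simps)
qed


lemma ex_exp_pnorm_ratio_power4_ge:
  fixes a :: "'m::finite \<Rightarrow> real ^ 'n::finite"
  defines "A \<equiv> (\<chi> i j. a i $ j / sqrt (real CARD('n))) :: real ^ 'n ^ 'm"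
  shows "\<exists>x. x \<noteq> 0 \<and> 3 / (1 + 2 / real CARD('n)) * ((\<Sum>i\<in>UNIV. exp_pnorm 2 (a i) ^ 4) / real CARD('m))
    \<le> (exp_pnorm 4 (A *v x) / exp_pnorm 2 x) ^ 4"
proof -
  define n where "n = real CARD('n)"
  define m where "m = real CARD('m)"
  define S where "S = (\<Sum>i\<in>UNIV. norm (a i) ^ 4)"
  have "n > 0" "m > 0" by (simp_all add: n_def m_def)
  obtain x where "x \<noteq> 0" and x: "3 * S * norm x ^ 4 \<le> n * (n + 2) * (\<Sum>i\<in>UNIV. (a i \<bullet> x) ^ 4)"
    using ex_sum_inner_power4_ge[of a] unfolding S_def n_def by blast
  have "(\<Sum>i\<in>UNIV. exp_pnorm 2 (a i) ^ 4) / m = S / (n ^ 2 * m)"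
    by (simp add: exp_pnorm_2_power4 S_def n_def m_def sum_divide_distrib)
  then have "3 / (1 + 2 / n) * ((\<Sum>i\<in>UNIV. exp_pnorm 2 (a i) ^ 4) / m) = 3 / (1 + 2 / n) * (S / (n ^ 2 * m))"
    by simp
  also have "\<dots> = 3 * S / (m * n * (n + 2))"
    using \<open>n > 0\<close> \<open>m > 0\<close> by (simp add: field_simps power2_eq_square)
  also have "\<dots> \<le> (\<Sum>i\<in>UNIV. (a i \<bullet> x) ^ 4) / (m * norm x ^ 4)"
    using mult_left_mono[OF x, of m] \<open>x \<noteq> 0\<close> \<open>n > 0\<close> \<open>m > 0\<close>
    by (simp add: divide_simps mult_ac)
  also have "\<dots> = (exp_pnorm 4 (A *v x) / exp_pnorm 2 x) ^ 4"
    using exp_pnorm_ratio_power4[OF \<open>x \<noteq> 0\<close>, of a] by (simp add: A_def m_def)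
  finally show ?thesis
    using \<open>x \<noteq> 0\<close> unfolding n_def m_def by blast
qed

theorem lemma7p4:
  fixes a :: "'m::finite \<Rightarrow> real ^ 'n::finite"
  assumes "(\<Sum>i\<in>UNIV. (exp_pnorm 2 (a i)) ^ 4) / real CARD('m) \<ge> 1"
  shows "norm_2_to_4 ((\<chi> i j. a i $ j / sqrt (real CARD('n))) :: real ^ 'n ^ 'm)
           \<ge> (3 / (1 + 2 / real CARD('n))) powr (1 / 4)"
proof -
  define A where "A = ((\<chi> i j. a i $ j / sqrt (real CARD('n))) :: real ^ 'n ^ 'm)"
  define c where "c = 3 / (1 + 2 / real CARD('n))"
  obtain x where "x \<noteq> 0" and x: "c * ((\<Sum>i\<in>UNIV. exp_pnorm 2 (a i) ^ 4) / real CARD('m))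
      \<le> (exp_pnorm 4 (A *v x) / exp_pnorm 2 x) ^ 4"
    using ex_exp_pnorm_ratio_power4_ge[of a] unfolding A_def c_def by blast
  have "c \<ge> 0" by (simp add: c_def)
  then have "(c powr (1 / 4)) ^ 4 \<le> c * ((\<Sum>i\<in>UNIV. exp_pnorm 2 (a i) ^ 4) / real CARD('m))"
    using mult_left_mono[OF assms \<open>c \<ge> 0\<close>] by (simp add: powr_quarter_power4)
  with x have "(c powr (1 / 4)) ^ 4 \<le> (exp_pnorm 4 (A *v x) / exp_pnorm 2 x) ^ 4"
    by linarith
  then have "c powr (1 / 4) \<le> exp_pnorm 4 (A *v x) / exp_pnorm 2 x"
    by (simp add: power_mono_iff exp_pnorm_nonneg)
  also have "\<dots> \<le> norm_2_to_4 A"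
    using \<open>x \<noteq> 0\<close> by (rule exp_pnorm_ratio_le_norm_2_to_4)
  finally show ?thesis
    by (simp add: A_def c_def)
qed

end
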